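(* For all $y,y'\in\mathbb{R}^d$, $$\bigl|K(|y'|)y'-K(|y|)y\bigr|\le \sqrt{2(a^2+1)}\,a_0^{-1}\,|y'-y|.$$
   Context: Let $g(s)=a_0+a_1s^{\alpha_1}+\cdots+a_Ns^{\alpha_N}$ for $s\ge 0$, where $N\ge1$, $0<\alpha_1<\dots<\alpha_N$ are fixed numbers and $a_0,\dots,a_N\ge0$ with $a_0>0$, $a_N>0$. Define $K:[0,\infty)\to(0,\infty)$ by $K(\xi)=1/g(s(\xi))$, where $s=s(\xi)\ge0$ is the unique solution of $s\,g(s)=\xi$. Set $a=\alpha_N/(\alpha_N+1)\in(0,1)$. $|\cdot|$ is the Euclidean norm on $\mathbb{R}^d$. *)

theory Defs
  imports "HOL-Analysis.Analysis"
begin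

definition gfun :: "nat \<Rightarrow> (nat \<Rightarrow> real) \<Rightarrow> (nat \<Rightarrow> real) \<Rightarrow> real \<Rightarrow> real" where
  "gfun N c al s = c 0 + (\<Sum>i=1..N. c i * s powr al i)"

definition sfun :: "nat \<Rightarrow> (nat \<Rightarrow> real) \<Rightarrow> (nat \<Rightarrow> real) \<Rightarrow> real \<Rightarrow> real" where
  "sfun N c al xi = (THE s. s \<ge> 0 \<and> s * gfun N c al s = xi)"

definition Kfun :: "nat \<Rightarrow> (nat \<Rightarrow> real) \<Rightarrow> (nat \<Rightarrow> real) \<Rightarrow> real \<Rightarrow> real" where
  "Kfun N c al xi = 1 / gfun N c al (sfun N c al xi)"

end

theory Submission
  imports Defs
begin

text \<open>
  With \<open>s \<le> s'\<close> the solutions of \<open>s g(s) = \<xi>\<close> and \<open>s' g(s') = \<xi>'\<close>, the convexity of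
  \<open>s \<mapsto> s\<^bsup>1+\<alpha>\<^esup>\<close> gives \<open>s (g(s') - g(s)) \<le> \<alpha>\<^sub>N (s' - s) g(s')\<close>. Since
  \<open>\<xi>' - \<xi> = (s' - s) g(s') + s (g(s') - g(s))\<close>, this yields
  \<open>\<xi> (K(\<xi>) - K(\<xi>')) \<le> a (\<xi>' - \<xi>) / a\<^sub>0\<close>, while \<open>0 < K \<le> 1/a\<^sub>0\<close>. Writing
  \<open>K(|y'|)y' - K(|y|)y = K(|y'|)(y' - y) - (K(|y|) - K(|y'|))y\<close> for \<open>|y| \<le> |y'|\<close>
  then gives the Lipschitz constant \<open>(1 + a)/a\<^sub>0 \<le> \<surd>(2(a\<^sup>2 + 1))/a\<^sub>0\<close>.
\<close>

lemma mult_powr_diff_le: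
  fixes s s' p :: real
  assumes "0 \<le> s" "s \<le> s'" "0 \<le> p"
  shows "s * (s' powr p - s powr p) \<le> p * (s' - s) * s' powr p"
proof (cases "s = 0")
  case True
  then show ?thesis using assms by simp
next
  case False
  with assms have "0 < s" "0 < s'" by auto
  have convex: "convex_on {0<..} (\<lambda>x::real. x powr (1 + p))"
    by (rule powr_convex) (use assms in simp)
  have "((\<lambda>x::real. x powr (1 + p)) has_field_derivative (1 + p) * s' powr p) (at s' within {0<..})"
    using \<open>0 < s'\<close> by (auto intro!: derivative_eq_intros)
  then have "(1 + p) * s' powr p * (s - s') \<le> s powr (1 + p) - s' powr (1 + p)"
    by (intro convex_on_imp_above_tangent[OF convex])
      (use \<open>0 < s\<close> \<open>0 < s'\<close> in \<open>auto simp: interior_open\<close>)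
  moreover have "s powr (1 + p) = s * s powr p" "s' powr (1 + p) = s' * s' powr p"
    using \<open>0 < s\<close> \<open>0 < s'\<close> by (simp_all add: powr_add)
  ultimately show ?thesis by (simp add: algebra_simps)
qed

lemma lift_Suc_mono_le_between:
  fixes f :: "nat \<Rightarrow> real"
  assumes "\<forall>i\<in>{1..<N}. f i < f (Suc i)" "1 \<le> i" "i \<le> j" "j \<le> N"
  shows "f i \<le> f j"
  using assms(3,2,4)
proof (induction j rule: dec_induct)
  case (step n)
  with assms(1) have "f n < f (Suc n)" by auto
  with step show ?case by linarith
qed simp

lemma one_plus_le_sqrt_two_sq_plus_one:
  fixes a :: real
  shows "1 + a \<le> sqrt (2 * (a\<^sup>2 + 1))"
proof (rule real_le_rsqrt)
  have "0 \<le> (a - 1)\<^sup>2" by simp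
  then show "(1 + a)\<^sup>2 \<le> 2 * (a\<^sup>2 + 1)" by (simp add: power2_eq_square algebra_simps)
qed

locale power_sum_kernel =
  fixes N :: nat and c al :: "nat \<Rightarrow> real"
  assumes N_pos: "1 \<le> N"
    and exponents: "\<forall>i\<in>{1..N}. 0 < al i \<and> al i \<le> al N"
    and coeffs_nonneg: "\<forall>i\<le>N. 0 \<le> c i"
    and c0_pos: "0 < c 0"
begin

abbreviation "g \<equiv> gfun N c al"
abbreviation "s \<equiv> sfun N c al"
abbreviation "K \<equiv> Kfun N c al"

lemma al_N_pos: "0 < al N"
  using exponents N_pos by auto

lemma gfun_ge_c0: "c 0 \<le> g t"
  unfolding gfun_def using coeffs_nonneg by (auto intro!: sum_nonneg)

lemma gfun_pos: "0 < g t"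
  using gfun_ge_c0 c0_pos by (rule less_le_trans[rotated])

lemma gfun_mono:
  assumes "0 \<le> t" "t \<le> t'"
  shows "g t \<le> g t'"
  unfolding gfun_def using assms exponents coeffs_nonneg
  by (auto intro!: sum_mono mult_left_mono powr_mono2)

lemma mult_gfun_strict_mono:
  assumes "0 \<le> t" "t < t'"
  shows "t * g t < t' * g t'"
proof -
  have "t * g t < t' * g t"
    using assms gfun_ge_c0[of t] c0_pos by (intro mult_strict_right_mono) auto
  also have "\<dots> \<le> t' * g t'"
    using assms gfun_mono[of t t'] by (intro mult_left_mono) auto
  finally show ?thesis .
qed

lemma continuous_on_mult_gfun:
  assumes "0 \<le> a"
  shows "continuous_on {a..b} (\<lambda>t. t * g t)"
  unfolding gfun_def using exponents assms
  by (auto intro!: continuous_intros continuous_on_powr')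

lemma mult_gfun_eq_ex1:
  assumes "0 \<le> \<xi>"
  shows "\<exists>!t. 0 \<le> t \<and> t * g t = \<xi>"
proof -
  have "\<xi> = (\<xi> / c 0) * c 0" using c0_pos by simp
  also have "\<dots> \<le> (\<xi> / c 0) * g (\<xi> / c 0)"
    using gfun_ge_c0 assms c0_pos by (intro mult_left_mono) auto
  finally have "\<xi> \<le> (\<xi> / c 0) * g (\<xi> / c 0)" .
  then obtain t where t: "0 \<le> t" "t * g t = \<xi>"
    using IVT'[of "\<lambda>t. t * g t" 0 \<xi> "\<xi> / c 0"] continuous_on_mult_gfun[of 0 "\<xi> / c 0"]
      assms c0_pos by auto
  moreover have "t' = t" if "0 \<le> t'" "t' * g t' = \<xi>" for t'
    using mult_gfun_strict_mono[of t t'] mult_gfun_strict_mono[of t' t] that t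
    by (cases t' t rule: linorder_cases) auto
  ultimately show ?thesis by blast
qed

lemma sfun_nonneg: "0 \<le> \<xi> \<Longrightarrow> 0 \<le> s \<xi>"
  and mult_gfun_sfun: "0 \<le> \<xi> \<Longrightarrow> s \<xi> * g (s \<xi>) = \<xi>"
  using theI'[OF mult_gfun_eq_ex1] unfolding sfun_def by auto

lemma sfun_mono:
  assumes "0 \<le> \<xi>" "\<xi> \<le> \<xi>'"
  shows "s \<xi> \<le> s \<xi>'"
  using mult_gfun_strict_mono[of "s \<xi>'" "s \<xi>"] assms
    sfun_nonneg[of \<xi>'] mult_gfun_sfun[of \<xi>] mult_gfun_sfun[of \<xi>']
  by force

lemma mult_gfun_diff_le:
  assumes "0 \<le> t" "t \<le> t'"
  shows "t * (g t' - g t) \<le> al N * (t' - t) * g t'"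
proof -
  have "t * (g t' - g t) = (\<Sum>i=1..N. c i * (t * (t' powr al i - t powr al i)))"
    unfolding gfun_def by (simp add: sum_distrib_left algebra_simps sum_subtractf)
  also have "\<dots> \<le> (\<Sum>i=1..N. c i * (al N * (t' - t) * t' powr al i))"
  proof (rule sum_mono)
    fix i assume i: "i \<in> {1..N}"
    then have "0 < al i" "al i \<le> al N" using exponents by auto
    then have "t * (t' powr al i - t powr al i) \<le> al i * (t' - t) * t' powr al i"
      using assms by (intro mult_powr_diff_le) auto
    also have "\<dots> \<le> al N * (t' - t) * t' powr al i"
      using \<open>al i \<le> al N\<close> assms by (intro mult_right_mono) auto
    finally show "c i * (t * (t' powr al i - t powr al i)) \<le> c i * (al N * (t' - t) * t' powr al i)"
      using coeffs_nonneg i by (intro mult_left_mono) auto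
  qed
  also have "\<dots> = al N * (t' - t) * (g t' - c 0)"
    unfolding gfun_def by (simp add: sum_distrib_left algebra_simps)
  also have "\<dots> \<le> al N * (t' - t) * g t'"
    using al_N_pos assms c0_pos by (intro mult_left_mono) auto
  finally show ?thesis .
qed

lemma Kfun_pos: "0 < K \<xi>"
  and Kfun_le: "K \<xi> \<le> 1 / c 0"
  unfolding Kfun_def using gfun_pos gfun_ge_c0 c0_pos by (auto simp: frac_le)

lemma Kfun_antimono:
  assumes "0 \<le> \<xi>" "\<xi> \<le> \<xi>'"
  shows "K \<xi>' \<le> K \<xi>"
proof -
  have "g (s \<xi>) \<le> g (s \<xi>')"
    using assms by (intro gfun_mono sfun_nonneg sfun_mono)
  then show ?thesis
    unfolding Kfun_def using gfun_pos by (simp add: frac_le)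
qed

lemma mult_Kfun_diff_le:
  assumes "0 \<le> \<xi>" "\<xi> \<le> \<xi>'"
  shows "\<xi> * (K \<xi> - K \<xi>') \<le> al N / (al N + 1) / c 0 * (\<xi>' - \<xi>)"
proof -
  define t t' where "t = s \<xi>" and "t' = s \<xi>'"
  have "0 \<le> t" "t \<le> t'" "t * g t = \<xi>" "t' * g t' = \<xi>'"
    using assms sfun_nonneg sfun_mono mult_gfun_sfun by (auto simp: t_def t'_def)
  define X where "X = t * (g t' - g t)"
  have "0 < g t" "g t \<le> g t'"
    using gfun_ge_c0[of t] c0_pos gfun_mono \<open>0 \<le> t\<close> \<open>t \<le> t'\<close> by auto
  then have "0 \<le> X" using \<open>0 \<le> t\<close> by (simp add: X_def)
  have "\<xi> * (K \<xi> - K \<xi>') = X / g t'"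
    using \<open>0 < g t\<close> \<open>g t \<le> g t'\<close> \<open>t * g t = \<xi>\<close>
    by (simp add: Kfun_def X_def t_def t'_def field_simps)
  also have "\<dots> \<le> X / c 0"
    using \<open>0 \<le> X\<close> gfun_ge_c0 c0_pos by (simp add: frac_le)
  also have "X \<le> al N / (al N + 1) * (\<xi>' - \<xi>)"
  proof -
    have "X \<le> al N * ((t' - t) * g t')"
      using mult_gfun_diff_le[OF \<open>0 \<le> t\<close> \<open>t \<le> t'\<close>] by (simp add: X_def)
    moreover have "\<xi>' - \<xi> = (t' - t) * g t' + X"
      using \<open>t * g t = \<xi>\<close> \<open>t' * g t' = \<xi>'\<close> by (simp add: X_def algebra_simps)
    then have "al N * (\<xi>' - \<xi>) = al N * ((t' - t) * g t') + al N * X"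
      by (simp add: distrib_left)
    ultimately have "(al N + 1) * X \<le> al N * (\<xi>' - \<xi>)"
      by (simp add: distrib_right)
    then show ?thesis using al_N_pos by (simp add: field_simps)
  qed
  then have "X / c 0 \<le> al N / (al N + 1) * (\<xi>' - \<xi>) / c 0"
    using c0_pos by (intro divide_right_mono) auto
  finally show ?thesis by simp
qed

lemma Kfun_scaleR_lipschitz_ordered:
  fixes y y' :: "'a::real_normed_vector"
  assumes "norm y \<le> norm y'"
  shows "norm (K (norm y') *\<^sub>R y' - K (norm y) *\<^sub>R y) \<le> (1 + al N / (al N + 1)) / c 0 * norm (y' - y)"
proof -
  let ?a = "al N / (al N + 1)"
  have "K (norm y') *\<^sub>R y' - K (norm y) *\<^sub>R y
      = K (norm y') *\<^sub>R (y' - y) - (K (norm y) - K (norm y')) *\<^sub>R y"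
    by (simp add: algebra_simps)
  then have "norm (K (norm y') *\<^sub>R y' - K (norm y) *\<^sub>R y)
      \<le> norm (K (norm y') *\<^sub>R (y' - y)) + norm ((K (norm y) - K (norm y')) *\<^sub>R y)"
    by (metis norm_triangle_ineq4)
  also have "\<dots> = K (norm y') * norm (y' - y) + norm y * (K (norm y) - K (norm y'))"
    using Kfun_pos[of "norm y'"] Kfun_antimono[OF norm_ge_zero assms] by simp
  also have "K (norm y') * norm (y' - y) \<le> 1 / c 0 * norm (y' - y)"
    using Kfun_le by (rule mult_right_mono) simp
  also have "norm y * (K (norm y) - K (norm y')) \<le> ?a / c 0 * (norm y' - norm y)"
    using assms by (intro mult_Kfun_diff_le) auto
  also have "\<dots> \<le> ?a / c 0 * norm (y' - y)"
    using al_N_pos c0_pos norm_triangle_ineq2 by (intro mult_left_mono) auto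
  finally show ?thesis by (simp add: add_divide_distrib distrib_right)
qed

lemma Kfun_scaleR_lipschitz:
  fixes y y' :: "'a::real_normed_vector"
  shows "norm (K (norm y') *\<^sub>R y' - K (norm y) *\<^sub>R y) \<le> (1 + al N / (al N + 1)) / c 0 * norm (y' - y)"
proof (cases "norm y \<le> norm y'")
  case False
  then show ?thesis
    using Kfun_scaleR_lipschitz_ordered[of y' y] by (simp add: norm_minus_commute)
qed (rule Kfun_scaleR_lipschitz_ordered)

end

theorem proposition2p2:
  fixes N :: nat and c al :: "nat \<Rightarrow> real" and y y' :: "'n::euclidean_space"
  assumes "N \<ge> 1"
    and "0 < al 1"
    and "\<forall>i\<in>{1..<N}. al i < al (Suc i)"
    and "\<forall>i\<le>N. 0 \<le> c i"
    and "0 < c 0" and "0 < c N"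
  shows "norm (Kfun N c al (norm y') *\<^sub>R y' - Kfun N c al (norm y) *\<^sub>R y)
           \<le> sqrt (2 * ((al N / (al N + 1))\<^sup>2 + 1)) / c 0 * norm (y' - y)"
proof -
  have "\<forall>i\<in>{1..N}. 0 < al i \<and> al i \<le> al N"
    using lift_Suc_mono_le_between[OF assms(3)] assms(2) by (force intro: less_le_trans)
  then interpret power_sum_kernel N c al
    using assms by unfold_locales auto
  have "norm (K (norm y') *\<^sub>R y' - K (norm y) *\<^sub>R y) \<le> (1 + al N / (al N + 1)) / c 0 * norm (y' - y)"
    by (rule Kfun_scaleR_lipschitz)
  also have "\<dots> \<le> sqrt (2 * ((al N / (al N + 1))\<^sup>2 + 1)) / c 0 * norm (y' - y)"
    using one_plus_le_sqrt_two_sq_plus_one c0_pos by (intro mult_right_mono divide_right_mono) auto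
  finally show ?thesis .
qed

end
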